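(* Let $D:\mathbb R^2\setminus\{0\}\to\mathbb R$ be nonnegative, bounded and continuously differentiable, and consider $\ddot x+D(x)\dot x=-x/|x|^3$. Let $T,r_A,r_B>0$ and let $x_n:[-T,0]\to\mathbb R^2\setminus\{0\}$ be solutions with $|x_n(-T)|=r_A$ and $|x_n(0)|=r_B$ such that $\{\dot r_n(0)\}$ is bounded, where $r_n=|x_n|$. Then $\{c_n(0)\}$ is bounded, where $c_n=\det(x_n,\dot x_n)$. *)

theory Defs
  imports "HOL-Analysis.Analysis"
begin

definition det2 :: "real^2 \<Rightarrow> real^2 \<Rightarrow> real" where
  "det2 u v = u$1 * v$2 - u$2 * v$1"

end

theory Submission
  imports Defs
begin

text \<open>
  Along a solution write \<open>u = x \<bullet> x'\<close>, so that \<open>(|x|\<^sup>2)' = 2 u\<close>, \<open>c = det2 x x'\<close> and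
  \<open>E = |x'|\<^sup>2 / 2 - 1 / |x|\<close>. Then \<open>c' = - D c\<close> and \<open>E' = - D |x'|\<^sup>2\<close>, so going backwards
  from time 0 the energy does not decrease and \<open>|c|\<close> stays between \<open>|c(0)|\<close> and
  \<open>|c(0)| e\<^sup>M\<^sup>T\<close>, where \<open>M\<close> bounds \<open>D\<close>. Moreover \<open>(u / c)' = (|x'|\<^sup>2 - 1 / |x|) / c\<close> and
  \<open>|x'|\<^sup>2 - 1 / |x| \<ge> 2 E \<ge> 2 E(0)\<close>, so for large \<open>E(0)\<close> the quotient \<open>u / c\<close> falls so fast
  backwards in time that \<open>u \<le> - a < 0\<close> on \<open>[-T, -T/2]\<close>, with \<open>a\<close> of order \<open>T E(0) e\<^sup>-\<^sup>M\<^sup>T\<close>.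
  Then \<open>r\<^sub>A\<^sup>2 = |x(-T)|\<^sup>2 \<ge> a T\<close>, which bounds \<open>E(0)\<close> in terms of \<open>r\<^sub>A\<close> and \<open>u(0) = r\<^sub>B r'(0)\<close>;
  Lagrange's identity \<open>|x|\<^sup>2 |x'|\<^sup>2 = c\<^sup>2 + u\<^sup>2\<close> turns this into a bound on \<open>c(0)\<close>.
\<close>

lemma DERIV_ge_imp_diff_ge:
  fixes f f' :: "real \<Rightarrow> real"
  assumes "a \<le> b" "{a..b} \<subseteq> S"
    and deriv: "\<And>t. t \<in> {a..b} \<Longrightarrow> (f has_real_derivative f' t) (at t within S)"
    and lower: "\<And>t. t \<in> {a..b} \<Longrightarrow> K \<le> f' t"
  shows "K * (b - a) \<le> f b - f a"
proof -
  have "(f has_derivative (*) (f' t)) (at t within {a..b})" if "a \<le> t" "t \<le> b" for t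
    using has_field_derivative_subset[OF deriv assms(2)] that
    by (auto simp: has_field_derivative_def)
  then obtain t where "t \<in> {a..b}" "f b - f a = f' t * (b - a)"
    using mvt_very_simple[of a b f "\<lambda>t. (*) (f' t)"] \<open>a \<le> b\<close> by auto
  with lower[of t] \<open>a \<le> b\<close> show ?thesis
    by (simp add: mult_right_mono)
qed

lemma DERIV_le_imp_diff_le:
  fixes f f' :: "real \<Rightarrow> real"
  assumes "a \<le> b" "{a..b} \<subseteq> S"
    and "\<And>t. t \<in> {a..b} \<Longrightarrow> (f has_real_derivative f' t) (at t within S)"
    and "\<And>t. t \<in> {a..b} \<Longrightarrow> f' t \<le> K"
  shows "f b - f a \<le> K * (b - a)"
proof -
  have "- K * (b - a) \<le> - f b - - f a"
    by (rule DERIV_ge_imp_diff_ge[where f' = "\<lambda>t. - f' t"]) (use assms in \<open>auto intro: DERIV_minus\<close>)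
  then show ?thesis by simp
qed

lemma bounded_bilinear_det2: "bounded_bilinear det2"
proof
  fix u v w :: "real^2" and r :: real
  show "det2 (u + v) w = det2 u w + det2 v w" "det2 u (v + w) = det2 u v + det2 u w"
    "det2 (r *\<^sub>R u) v = r *\<^sub>R det2 u v" "det2 u (r *\<^sub>R v) = r *\<^sub>R det2 u v"
    by (simp_all add: det2_def algebra_simps)
next
  have "norm (det2 u v) \<le> norm u * norm v * 2" for u v :: "real^2"
  proof -
    have entry_le: "\<bar>u$i * v$j\<bar> \<le> norm u * norm v" for i j
      unfolding abs_mult by (intro mult_mono component_le_norm_cart) auto
    show ?thesis
      using abs_triangle_ineq4[of "u$1 * v$2" "u$2 * v$1"] entry_le[of 1 2] entry_le[of 2 1]
      unfolding det2_def real_norm_def by linarith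
  qed
  then show "\<exists>K. \<forall>u v. norm (det2 u v) \<le> norm u * norm v * K" by blast
qed

lemma has_real_derivative_det2:
  assumes "(f has_vector_derivative f') (at t within S)" "(g has_vector_derivative g') (at t within S)"
  shows "((\<lambda>s. det2 (f s) (g s)) has_real_derivative det2 (f t) g' + det2 f' (g t)) (at t within S)"
  using bounded_bilinear.has_vector_derivative[OF bounded_bilinear_det2 assms]
  by (simp add: has_real_derivative_iff_has_vector_derivative)

lemma has_real_derivative_inner:
  fixes f g :: "real \<Rightarrow> 'a::real_inner"
  assumes "(f has_vector_derivative f') (at t within S)" "(g has_vector_derivative g') (at t within S)"
  shows "((\<lambda>s. inner (f s) (g s)) has_real_derivative inner (f t) g' + inner f' (g t)) (at t within S)"
  using bounded_bilinear.has_vector_derivative[OF bounded_bilinear_inner assms]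
  by (simp add: has_real_derivative_iff_has_vector_derivative)

lemma has_real_derivative_norm:
  fixes f :: "real \<Rightarrow> 'a::real_inner"
  assumes "(f has_vector_derivative f') (at t within S)" "f t \<noteq> 0"
  shows "((\<lambda>s. norm (f s)) has_real_derivative inner (f t) f' / norm (f t)) (at t within S)"
proof -
  have "(\<lambda>h. inner (h *\<^sub>R f') (sgn (f t))) = (*) (inner (f t) f' / norm (f t))"
    by (auto simp: sgn_div_norm inner_commute field_simps)
  then show ?thesis
    using has_derivative_compose[OF assms(1)[unfolded has_vector_derivative_def]
        has_derivative_norm[OF assms(2)]]
    by (simp add: has_field_derivative_def)
qed

lemma det2_sq_add_inner_sq: "(det2 u v)\<^sup>2 + (inner u v)\<^sup>2 = (norm u)\<^sup>2 * (norm v)\<^sup>2"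
  unfolding det2_def inner_vec_def power2_norm_eq_inner sum_2 by (simp add: power2_eq_square algebra_simps)

lemma damped_solution_ge_endpoint:
  fixes y d :: "real \<Rightarrow> real"
  assumes deriv: "\<And>s. s \<in> {a..b} \<Longrightarrow> (y has_real_derivative - d s * y s) (at s within {a..b})"
    and d_nonneg: "\<And>s. s \<in> {a..b} \<Longrightarrow> 0 \<le> d s"
    and "y b > 0" "t \<in> {a..b}"
  shows "y b \<le> y t"
proof -
  have sq_ge: "(y b)\<^sup>2 \<le> (y s)\<^sup>2" if "s \<in> {a..b}" for s
  proof -
    have "(y b)\<^sup>2 - (y s)\<^sup>2 \<le> 0 * (b - s)"
    proof (rule DERIV_le_imp_diff_le)
      fix r assume "r \<in> {s..b}"
      with that have r: "r \<in> {a..b}" by auto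
      show "((\<lambda>s. (y s)\<^sup>2) has_real_derivative - 2 * d r * (y r)\<^sup>2) (at r within {a..b})"
        using DERIV_mult[OF deriv[OF r] deriv[OF r]] by (simp add: power2_eq_square algebra_simps)
      show "- 2 * d r * (y r)\<^sup>2 \<le> 0"
        using d_nonneg[OF r] by simp
    qed (use that in auto)
    then show ?thesis by simp
  qed
  have "y t > 0"
  proof (rule ccontr)
    assume "\<not> y t > 0"
    moreover have "continuous_on {t..b} y"
      using continuous_on_subset[OF DERIV_continuous_on[OF deriv]] \<open>t \<in> {a..b}\<close> by auto
    ultimately obtain s where "t \<le> s" "s \<le> b" "y s = 0"
      using IVT'[of y t 0 b] \<open>y b > 0\<close> \<open>t \<in> {a..b}\<close> by auto
    with sq_ge[of s] \<open>y b > 0\<close> \<open>t \<in> {a..b}\<close> show False by auto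
  qed
  then show ?thesis
    using power2_le_imp_le[OF sq_ge[OF \<open>t \<in> {a..b}\<close>]] by simp
qed

lemma damped_solution_le_endpoint_exp:
  fixes y d :: "real \<Rightarrow> real"
  assumes deriv: "\<And>s. s \<in> {a..b} \<Longrightarrow> (y has_real_derivative - d s * y s) (at s within {a..b})"
    and d_nonneg: "\<And>s. s \<in> {a..b} \<Longrightarrow> 0 \<le> d s"
    and d_le: "\<And>s. s \<in> {a..b} \<Longrightarrow> d s \<le> M"
    and "y b > 0" "t \<in> {a..b}"
  shows "y t \<le> y b * exp (M * (b - t))"
proof -
  have "0 * (b - t) \<le> y b * exp (M * b) - y t * exp (M * t)"
  proof (rule DERIV_ge_imp_diff_ge)
    fix s assume "s \<in> {t..b}"
    with \<open>t \<in> {a..b}\<close> have s: "s \<in> {a..b}" by auto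
    show "((\<lambda>s. y s * exp (M * s)) has_real_derivative (M - d s) * y s * exp (M * s)) (at s within {a..b})"
    proof -
      have "((\<lambda>s. exp (M * s)) has_real_derivative exp (M * s) * M) (at s within {a..b})"
        by (auto intro!: derivative_eq_intros)
      from DERIV_mult[OF deriv[OF s] this] show ?thesis
        by (simp add: algebra_simps)
    qed
    show "0 \<le> (M - d s) * y s * exp (M * s)"
      using d_le[OF s] damped_solution_ge_endpoint[OF deriv d_nonneg \<open>y b > 0\<close> s] \<open>y b > 0\<close> by simp
  qed (use \<open>t \<in> {a..b}\<close> in auto)
  then have "y t \<le> y b * exp (M * b) / exp (M * t)"
    by (simp add: pos_le_divide_eq)
  then show ?thesis
    by (simp add: exp_diff right_diff_distrib)
qed

locale damped_kepler_arc =
  fixes x v :: "real \<Rightarrow> real^2" and d :: "real \<Rightarrow> real" and M T :: real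
  assumes T_pos: "T > 0"
    and x_nonzero: "\<And>t. t \<in> {-T..0} \<Longrightarrow> x t \<noteq> 0"
    and d_nonneg: "\<And>t. t \<in> {-T..0} \<Longrightarrow> 0 \<le> d t"
    and d_le: "\<And>t. t \<in> {-T..0} \<Longrightarrow> d t \<le> M"
    and x_deriv: "\<And>t. t \<in> {-T..0} \<Longrightarrow> (x has_vector_derivative v t) (at t within {-T..0})"
    and v_deriv: "\<And>t. t \<in> {-T..0} \<Longrightarrow>
      (v has_vector_derivative - (d t *\<^sub>R v t) - (1 / norm (x t) ^ 3) *\<^sub>R x t) (at t within {-T..0})"
begin

definition ang_mom :: "real \<Rightarrow> real" where
  "ang_mom t = det2 (x t) (v t)"

definition energy :: "real \<Rightarrow> real" where
  "energy t = (norm (v t))\<^sup>2 / 2 - 1 / norm (x t)"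

lemma M_nonneg: "0 \<le> M"
  using d_nonneg[of 0] d_le[of 0] T_pos by force

lemma sqnorm_deriv:
  assumes "t \<in> {-T..0}"
  shows "((\<lambda>s. (norm (x s))\<^sup>2) has_real_derivative 2 * inner (x t) (v t)) (at t within {-T..0})"
  using has_real_derivative_inner[OF x_deriv x_deriv, OF assms assms]
  by (simp add: power2_norm_eq_inner inner_commute)

lemma norm_deriv:
  assumes "t \<in> {-T..0}"
  shows "((\<lambda>s. norm (x s)) has_real_derivative inner (x t) (v t) / norm (x t)) (at t within {-T..0})"
  using has_real_derivative_norm[OF x_deriv x_nonzero, OF assms assms] .

lemma radial_deriv:
  assumes "t \<in> {-T..0}"
  shows "((\<lambda>s. inner (x s) (v s)) has_real_derivative
      (norm (v t))\<^sup>2 - d t * inner (x t) (v t) - 1 / norm (x t)) (at t within {-T..0})"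
proof -
  have "norm (x t) > 0" using x_nonzero[OF assms] by simp
  then have "inner (x t) (- (d t *\<^sub>R v t) - (1 / norm (x t) ^ 3) *\<^sub>R x t) + inner (v t) (v t)
      = (norm (v t))\<^sup>2 - d t * inner (x t) (v t) - 1 / norm (x t)"
    by (simp add: inner_diff_right dot_square_norm power2_eq_square power3_eq_cube)
  then show ?thesis
    using has_real_derivative_inner[OF x_deriv v_deriv, OF assms assms] by simp
qed

lemma ang_mom_deriv:
  assumes "t \<in> {-T..0}"
  shows "(ang_mom has_real_derivative - d t * ang_mom t) (at t within {-T..0})"
  using has_real_derivative_det2[OF x_deriv v_deriv, OF assms assms]
  unfolding ang_mom_def[abs_def] by (simp add: det2_def algebra_simps)

lemma energy_deriv:
  assumes "t \<in> {-T..0}"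
  shows "(energy has_real_derivative - d t * (norm (v t))\<^sup>2) (at t within {-T..0})"
proof -
  define acc where "acc = - (d t *\<^sub>R v t) - (1 / norm (x t) ^ 3) *\<^sub>R x t"
  have R: "norm (x t) > 0" using x_nonzero[OF assms] by simp
  have "energy = (\<lambda>s. inner (v s) (v s) / 2 - 1 / norm (x s))"
    by (simp add: energy_def fun_eq_iff dot_square_norm)
  moreover have "((\<lambda>s. inner (v s) (v s) / 2 - 1 / norm (x s)) has_real_derivative
      inner (v t) acc + inner (x t) (v t) / norm (x t) ^ 3) (at t within {-T..0})"
    using R unfolding acc_def
    by (auto intro!: derivative_eq_intros has_real_derivative_inner v_deriv norm_deriv assms
        simp: inner_commute power2_eq_square power3_eq_cube)
  moreover have "inner (v t) acc + inner (x t) (v t) / norm (x t) ^ 3 = - d t * (norm (v t))\<^sup>2"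
    unfolding acc_def by (simp add: inner_diff_right inner_commute dot_square_norm)
  ultimately show ?thesis by simp
qed

lemma energy_0_le:
  assumes "t \<in> {-T..0}"
  shows "energy 0 \<le> energy t"
proof -
  have "energy 0 - energy t \<le> 0 * (0 - t)"
  proof (rule DERIV_le_imp_diff_le)
    fix s assume "s \<in> {t..0}"
    with assms have s: "s \<in> {-T..0}" by auto
    show "(energy has_real_derivative - d s * (norm (v s))\<^sup>2) (at s within {-T..0})"
      using energy_deriv[OF s] .
    show "- d s * (norm (v s))\<^sup>2 \<le> 0"
      using d_nonneg[OF s] by simp
  qed (use assms in auto)
  then show ?thesis by simp
qed

lemma ang_mom_sq_le:
  assumes "t \<in> {-T..0}"
  shows "(ang_mom t)\<^sup>2 \<le> 2 * (norm (x t))\<^sup>2 * energy t + 2 * norm (x t)"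
proof -
  have "norm (x t) > 0" using x_nonzero[OF assms] by simp
  then have "(norm (x t))\<^sup>2 * (norm (v t))\<^sup>2 = 2 * (norm (x t))\<^sup>2 * energy t + 2 * norm (x t)"
    by (simp add: energy_def power2_eq_square field_simps)
  with det2_sq_add_inner_sq[of "x t" "v t"] show ?thesis
    unfolding ang_mom_def using zero_le_power2[of "inner (x t) (v t)"] by linarith
qed

lemma radial_div_deriv:
  assumes "t \<in> {-T..0}"
    and y_deriv: "(y has_real_derivative - d t * y t) (at t within {-T..0})" and "y t \<noteq> 0"
  shows "((\<lambda>s. inner (x s) (v s) / y s) has_real_derivative
      ((norm (v t))\<^sup>2 - 1 / norm (x t)) / y t) (at t within {-T..0})"
  using DERIV_divide[OF radial_deriv[OF assms(1)] y_deriv \<open>y t \<noteq> 0\<close>]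
  by (rule DERIV_cong) (use \<open>y t \<noteq> 0\<close> in \<open>simp add: field_simps\<close>)

lemma radial_div_le:
  assumes y_deriv: "\<And>s. s \<in> {-T..0} \<Longrightarrow> (y has_real_derivative - d s * y s) (at s within {-T..0})"
    and y0: "y 0 > 0" and E0: "energy 0 \<ge> 0" and t: "t \<in> {-T..-T/2}"
  shows "inner (x t) (v t) / y t \<le> (inner (x 0) (v 0) - T * energy 0 / exp (M * T)) / y 0"
proof -
  define \<beta> where "\<beta> = 2 * energy 0 / (y 0 * exp (M * T))"
  have y_ge: "y 0 \<le> y s" if "s \<in> {-T..0}" for s
    using damped_solution_ge_endpoint[OF y_deriv d_nonneg y0 that] by simp
  have y_le: "y s \<le> y 0 * exp (M * T)" if s: "s \<in> {-T..0}" for s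
  proof -
    have "y s \<le> y 0 * exp (M * (0 - s))"
      using damped_solution_le_endpoint_exp[OF y_deriv d_nonneg d_le y0 s] by simp
    also have "\<dots> \<le> y 0 * exp (M * T)"
      using mult_left_mono[of "0 - s" T M] s M_nonneg y0 by auto
    finally show ?thesis .
  qed
  have slope: "\<beta> \<le> ((norm (v s))\<^sup>2 - 1 / norm (x s)) / y s" if s: "s \<in> {-T..0}" for s
  proof -
    have "y s > 0" using y_ge[OF s] y0 by simp
    have "(norm (v s))\<^sup>2 - 1 / norm (x s) = 2 * energy s + 1 / norm (x s)"
      by (simp add: energy_def)
    also have "\<dots> \<ge> 2 * energy 0"
      using energy_0_le[OF s] by (simp add: add_increasing2)
    finally have "2 * energy 0 / y s \<le> ((norm (v s))\<^sup>2 - 1 / norm (x s)) / y s"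
      using \<open>y s > 0\<close> by (simp add: divide_right_mono)
    moreover have "\<beta> \<le> 2 * energy 0 / y s"
      unfolding \<beta>_def using y_le[OF s] \<open>y s > 0\<close> E0 by (intro divide_left_mono) auto
    ultimately show ?thesis by linarith
  qed
  have "\<beta> * (0 - t) \<le> inner (x 0) (v 0) / y 0 - inner (x t) (v t) / y t"
  proof (rule DERIV_ge_imp_diff_ge)
    fix s assume "s \<in> {t..0}"
    with t have s: "s \<in> {-T..0}" by auto
    show "((\<lambda>s. inner (x s) (v s) / y s) has_real_derivative
        ((norm (v s))\<^sup>2 - 1 / norm (x s)) / y s) (at s within {-T..0})"
      using radial_div_deriv[OF s y_deriv[OF s]] y_ge[OF s] y0 by simp
  qed (use t slope in auto)
  moreover have "\<beta> * (T / 2) \<le> \<beta> * (0 - t)"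
    using t E0 y0 by (intro mult_left_mono) (auto simp: \<beta>_def)
  moreover have "\<beta> * (T / 2) = (T * energy 0 / exp (M * T)) / y 0"
    by (simp add: \<beta>_def field_simps)
  ultimately show ?thesis
    by (simp add: diff_divide_distrib)
qed

lemma energy_bound:
  assumes c0: "ang_mom 0 \<noteq> 0" and E0: "energy 0 \<ge> 0"
  shows "energy 0 \<le> exp (M * T) * ((norm (x (-T)))\<^sup>2 + T * inner (x 0) (v 0)) / T\<^sup>2"
proof -
  define y where "y s = sgn (ang_mom 0) * ang_mom s" for s
  define a where "a = T * energy 0 / exp (M * T) - inner (x 0) (v 0)"
  have y_deriv: "(y has_real_derivative - d s * y s) (at s within {-T..0})" if "s \<in> {-T..0}" for s
    using DERIV_cmult[OF ang_mom_deriv[OF that], of "sgn (ang_mom 0)"]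
    unfolding y_def[abs_def] by (simp add: algebra_simps)
  have y0: "y 0 > 0"
    using c0 by (simp add: y_def sgn_if)
  have "a * T \<le> (norm (x (-T)))\<^sup>2"
  proof (cases "a \<le> 0")
    case True
    then have "a * T \<le> 0" using T_pos by (simp add: mult_nonpos_nonneg)
    then show ?thesis by (metis order_trans zero_le_power2)
  next
    case False
    have radial_le: "inner (x s) (v s) \<le> - a" if s: "s \<in> {-T..-T/2}" for s
    proof -
      from s have s': "s \<in> {-T..0}" using T_pos by auto
      have "y 0 \<le> y s"
        using damped_solution_ge_endpoint[OF y_deriv d_nonneg y0 s'] by simp
      have "inner (x s) (v s) / y s \<le> - a / y 0"
        using radial_div_le[OF y_deriv y0 E0 s] by (simp add: a_def)
      then have "inner (x s) (v s) \<le> - a / y 0 * y s"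
        using \<open>y 0 \<le> y s\<close> y0 by (simp add: pos_divide_le_eq)
      also have "\<dots> \<le> - a / y 0 * y 0"
        using \<open>y 0 \<le> y s\<close> y0 False by (intro mult_left_mono_neg) auto
      finally show ?thesis using y0 by simp
    qed
    have "(norm (x (-T/2)))\<^sup>2 - (norm (x (-T)))\<^sup>2 \<le> (-2 * a) * (-T/2 - -T)"
    proof (rule DERIV_le_imp_diff_le)
      fix s assume s: "s \<in> {-T..-T/2}"
      then show "((\<lambda>s. (norm (x s))\<^sup>2) has_real_derivative 2 * inner (x s) (v s)) (at s within {-T..0})"
        using sqnorm_deriv T_pos by auto
      show "2 * inner (x s) (v s) \<le> -2 * a"
        using radial_le[OF s] by simp
    qed (use T_pos in auto)
    then have "a * T + (norm (x (-T/2)))\<^sup>2 \<le> (norm (x (-T)))\<^sup>2"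
      by (simp add: algebra_simps)
    then show ?thesis
      using zero_le_power2[of "norm (x (-T/2))"] by linarith
  qed
  then show ?thesis
    using T_pos by (simp add: a_def field_simps power2_eq_square)
qed

lemma ang_mom_bound:
  "(ang_mom 0)\<^sup>2 \<le> 2 * (norm (x 0))\<^sup>2 *
     (1 / norm (x 0) + exp (M * T) * ((norm (x (-T)))\<^sup>2 + T * \<bar>inner (x 0) (v 0)\<bar>) / T\<^sup>2)"
    (is "_ \<le> 2 * ?R\<^sup>2 * (1 / ?R + ?B)")
proof -
  have I0: "0 \<in> {-T..0}" using T_pos by simp
  have "?R > 0" using x_nonzero[OF I0] by simp
  have "?B \<ge> 0" using T_pos by simp
  show ?thesis
  proof (cases "ang_mom 0 = 0")
    case True
    then show ?thesis using \<open>?R > 0\<close> \<open>?B \<ge> 0\<close> by simp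
  next
    case False
    have "energy 0 \<le> ?B"
    proof (cases "energy 0 \<ge> 0")
      case True
      have "energy 0 \<le> exp (M * T) * ((norm (x (-T)))\<^sup>2 + T * inner (x 0) (v 0)) / T\<^sup>2"
        using energy_bound[OF False True] .
      also have "\<dots> \<le> ?B"
        using T_pos by (intro divide_right_mono mult_left_mono add_left_mono) auto
      finally show ?thesis .
    qed (use \<open>?B \<ge> 0\<close> in linarith)
    then have "2 * ?R\<^sup>2 * energy 0 \<le> 2 * ?R\<^sup>2 * ?B"
      by (intro mult_left_mono) auto
    moreover have "2 * ?R\<^sup>2 * (1 / ?R + ?B) = 2 * ?R + 2 * ?R\<^sup>2 * ?B"
      using \<open>?R > 0\<close> by (simp add: ring_distribs power2_eq_square)
    ultimately show ?thesis
      using ang_mom_sq_le[OF I0] by linarith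
  qed
qed

lemma radial_velocity_eq:
  assumes "((\<lambda>s. norm (x s)) has_real_derivative r) (at 0 within {-T..0})"
  shows "inner (x 0) (v 0) = norm (x 0) * r"
proof -
  have I0: "0 \<in> {-T..0}" using T_pos by simp
  have "inner (x 0) (v 0) / norm (x 0) = r"
    using vector_derivative_unique_within_closed_interval[of "-T" 0 0 "\<lambda>s. norm (x s)"]
      norm_deriv[OF I0] assms T_pos
    by (simp add: has_real_derivative_iff_has_vector_derivative)
  then show ?thesis
    using x_nonzero[OF I0] by (simp add: field_simps)
qed

end

theorem lemma7p4:
  fixes D :: "real^2 \<Rightarrow> real"
    and D' :: "real^2 \<Rightarrow> ((real^2) \<Rightarrow>\<^sub>L real)"
    and T rA rB :: real
    and x xd :: "nat \<Rightarrow> real \<Rightarrow> real^2"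
    and rd :: "nat \<Rightarrow> real"
  assumes D_nonneg: "\<And>y. y \<noteq> 0 \<Longrightarrow> D y \<ge> 0"
    and D_bounded: "bounded (D ` (- {0}))"
    and D_deriv: "\<And>y. y \<noteq> 0 \<Longrightarrow> (D has_derivative blinfun_apply (D' y)) (at y)"
    and D'_cont: "continuous_on (- {0}) D'"
    and T_pos: "T > 0" and rA_pos: "rA > 0" and rB_pos: "rB > 0"
    and x_nonzero: "\<And>n t. t \<in> {-T..0} \<Longrightarrow> x n t \<noteq> 0"
    and x_deriv: "\<And>n t. t \<in> {-T..0} \<Longrightarrow>
        (x n has_vector_derivative xd n t) (at t within {-T..0})"
    and xd_deriv: "\<And>n t. t \<in> {-T..0} \<Longrightarrow>
        (xd n has_vector_derivative
           (- (D (x n t) *\<^sub>R xd n t) - (1 / norm (x n t) ^ 3) *\<^sub>R x n t))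
        (at t within {-T..0})"
    and x_start: "\<And>n. norm (x n (-T)) = rA"
    and x_end: "\<And>n. norm (x n 0) = rB"
    and rd_deriv: "\<And>n. ((\<lambda>t. norm (x n t)) has_real_derivative rd n) (at 0 within {-T..0})"
    and rd_bounded: "bounded (range rd)"
  shows "bounded (range (\<lambda>n. det2 (x n 0) (xd n 0)))"
proof -
  obtain M where M: "\<And>y. y \<noteq> 0 \<Longrightarrow> \<bar>D y\<bar> \<le> M"
    using D_bounded unfolding bounded_iff by auto
  obtain K where K: "\<And>n. \<bar>rd n\<bar> \<le> K"
    using rd_bounded unfolding bounded_iff by auto
  define B where "B = 2 * rB\<^sup>2 * (1 / rB + exp (M * T) * (rA\<^sup>2 + T * (rB * K)) / T\<^sup>2)"
  have "(det2 (x n 0) (xd n 0))\<^sup>2 \<le> B" for n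
  proof -
    interpret arc: damped_kepler_arc "x n" "xd n" "\<lambda>t. D (x n t)" M T
      by unfold_locales (use T_pos x_nonzero D_nonneg M x_deriv xd_deriv in \<open>auto simp: abs_le_iff\<close>)
    have "\<bar>inner (x n 0) (xd n 0)\<bar> \<le> rB * K"
      using arc.radial_velocity_eq[OF rd_deriv] x_end K[of n] rB_pos by (simp add: abs_mult)
    then have "2 * rB\<^sup>2 * (1 / rB + exp (M * T) * (rA\<^sup>2 + T * \<bar>inner (x n 0) (xd n 0)\<bar>) / T\<^sup>2) \<le> B"
      unfolding B_def using T_pos by (intro mult_left_mono add_left_mono divide_right_mono) auto
    then show ?thesis
      using arc.ang_mom_bound x_start x_end unfolding arc.ang_mom_def by simp
  qed
  then have "\<bar>det2 (x n 0) (xd n 0)\<bar> \<le> sqrt B" for n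
    using real_le_rsqrt by simp
  then show ?thesis
    unfolding bounded_iff by auto
qed

end
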